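(* Let $\Gamma=G_4$ be the graph with two vertices $V_\alpha,V_\beta$, one loop at $V_\alpha$, one loop at $V_\beta$, and exactly one edge joining $V_\alpha$ and $V_\beta$, with degrees $d_\alpha,d_\beta\in\mathbb{Z}$. The family $\mathcal{F}(G_4,(d_\alpha,d_\beta))$ is jumping if and only if one of the following holds: (i) $d_\alpha<0$ and $d_\beta=1$; (ii) $d_\alpha=0$ and $d_\beta\ge 0$; (iii) $d_\alpha=1$ and $d_\beta<0$; (iv) $d_\alpha\ge 0$ and $d_\beta=0$; (v) $d_\alpha=d_\beta=1$.
   Context: Let $\Gamma$ be a connected graph (loops and multiple edges allowed) with vertices $V_1,\dots,V_n$ and integers $d_1,\dots,d_n$. A nodal curve with dual graph $\Gamma$ and rational components is a curve $C$ obtained from the disjoint union of copies $\mathbb{P}^1_{V_i}$ of $\mathbb{P}^1$ by choosing, for each edge of $\Gamma$, a point on each of its endpoint copies (all chosen points distinct) and identifying these two points to a node. A line bundle on $C$ is equivalent to line bundles on each $\mathbb{P}^1_{V_i}$ together with, at each node, an identification of the two fibres (descent data, a scalar in $\mathbb{C}^*$ after trivialising); global sections are tuples of sections on the $\mathbb{P}^1$'s compatible with these identifications. The family $\mathcal{F}(\Gamma,(d_i))$ consists of all pairs $(C,L)$ with $C$ such a curve (any choice of node positions) and $L$ a line bundle on $C$ whose pullback to $\mathbb{P}^1_{V_i}$ has degree $d_i$ for all $i$ (any descent data). $\Gamma$ with degrees $(d_i)$ is called jumping if $h^0(C,L)$ is not constant on $\mathcal{F}(\Gamma,(d_i))$,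 and non-jumping otherwise. *)

theory Defs
  imports "HOL-Computational_Algebra.Polynomial" "HOL-Library.Product_Plus"
begin

text \<open>Points of P^1 are given by homogeneous coordinates (a,b) in C^2 - {0}.
  A section of O(d) on P^1 (d >= 0) is a homogeneous polynomial of degree d,
  encoded as a univariate polynomial p of degree at most d, standing for
  sum_i coeff p i * X^i * Y^(d-i).\<close>

definition hom_sections :: "int \<Rightarrow> complex poly set" where
  "hom_sections d = (if d < 0 then {0} else {p. degree p \<le> nat d})"

definition hom_eval :: "int \<Rightarrow> complex poly \<Rightarrow> complex \<times> complex \<Rightarrow> complex" where
  "hom_eval d p x = (\<Sum>i\<le>nat d. coeff p i * fst x ^ i * snd x ^ (nat d - i))"

definition proj_point :: "complex \<times> complex \<Rightarrow> bool" where
  "proj_point x \<longleftrightarrow> x \<noteq> (0, 0)"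

definition proj_distinct :: "complex \<times> complex \<Rightarrow> complex \<times> complex \<Rightarrow> bool" where
  "proj_distinct x y \<longleftrightarrow> fst x * snd y \<noteq> fst y * snd x"

definition pair_scale :: "complex \<Rightarrow> complex poly \<times> complex poly \<Rightarrow> complex poly \<times> complex poly" where
  "pair_scale c st = (smult c (fst st), smult c (snd st))"

text \<open>Admissible data for a curve with dual graph G4 and a line bundle on it:
  p1,p2 (loop node on V_alpha), p3 (edge node on V_alpha), q1,q2 (loop node on V_beta),
  q3 (edge node on V_beta); all points on each component pairwise distinct;
  descent data l1 (loop at alpha), l2 (loop at beta), l3 (edge) nonzero scalars.\<close>
definition G4_admissible ::
  "(complex \<times> complex) \<Rightarrow> (complex \<times> complex) \<Rightarrow> (complex \<times> complex) \<Rightarrow>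
   (complex \<times> complex) \<Rightarrow> (complex \<times> complex) \<Rightarrow> (complex \<times> complex) \<Rightarrow>
   complex \<Rightarrow> complex \<Rightarrow> complex \<Rightarrow> bool" where
  "G4_admissible p1 p2 p3 q1 q2 q3 l1 l2 l3 \<longleftrightarrow>
     proj_point p1 \<and> proj_point p2 \<and> proj_point p3 \<and>
     proj_point q1 \<and> proj_point q2 \<and> proj_point q3 \<and>
     proj_distinct p1 p2 \<and> proj_distinct p1 p3 \<and> proj_distinct p2 p3 \<and>
     proj_distinct q1 q2 \<and> proj_distinct q1 q3 \<and> proj_distinct q2 q3 \<and>
     l1 \<noteq> 0 \<and> l2 \<noteq> 0 \<and> l3 \<noteq> 0"

definition G4_sections ::
  "int \<Rightarrow> int \<Rightarrow> (complex \<times> complex) \<Rightarrow> (complex \<times> complex) \<Rightarrow> (complex \<times> complex) \<Rightarrow>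
   (complex \<times> complex) \<Rightarrow> (complex \<times> complex) \<Rightarrow> (complex \<times> complex) \<Rightarrow>
   complex \<Rightarrow> complex \<Rightarrow> complex \<Rightarrow> (complex poly \<times> complex poly) set" where
  "G4_sections da db p1 p2 p3 q1 q2 q3 l1 l2 l3 =
     {(s, t). s \<in> hom_sections da \<and> t \<in> hom_sections db \<and>
        hom_eval da s p1 = l1 * hom_eval da s p2 \<and>
        hom_eval db t q1 = l2 * hom_eval db t q2 \<and>
        hom_eval da s p3 = l3 * hom_eval db t q3}"

definition G4_h0 ::
  "int \<Rightarrow> int \<Rightarrow> (complex \<times> complex) \<Rightarrow> (complex \<times> complex) \<Rightarrow> (complex \<times> complex) \<Rightarrow>
   (complex \<times> complex) \<Rightarrow> (complex \<times> complex) \<Rightarrow> (complex \<times> complex) \<Rightarrow>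
   complex \<Rightarrow> complex \<Rightarrow> complex \<Rightarrow> nat" where
  "G4_h0 da db p1 p2 p3 q1 q2 q3 l1 l2 l3 =
     vector_space.dim pair_scale (G4_sections da db p1 p2 p3 q1 q2 q3 l1 l2 l3)"

definition G4_jumping :: "int \<Rightarrow> int \<Rightarrow> bool" where
  "G4_jumping da db \<longleftrightarrow>
     (\<exists>p1 p2 p3 q1 q2 q3 l1 l2 l3 p1' p2' p3' q1' q2' q3' l1' l2' l3'.
        G4_admissible p1 p2 p3 q1 q2 q3 l1 l2 l3 \<and>
        G4_admissible p1' p2' p3' q1' q2' q3' l1' l2' l3' \<and>
        G4_h0 da db p1 p2 p3 q1 q2 q3 l1 l2 l3 \<noteq>
        G4_h0 da db p1' p2' p3' q1' q2' q3' l1' l2' l3')"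

end

theory Submission
  imports Defs
begin

text \<open>A global section is a pair \<open>(s, t)\<close> of sections of \<open>O(d\<^sub>\<alpha>)\<close> and \<open>O(d\<^sub>\<beta>)\<close>
  subject to three linear conditions: the loop conditions \<open>s(p\<^sub>1) = \<lambda>\<^sub>1 s(p\<^sub>2)\<close>,
  \<open>t(q\<^sub>1) = \<lambda>\<^sub>2 t(q\<^sub>2)\<close> and the edge condition \<open>s(p\<^sub>3) = \<lambda>\<^sub>3 t(q\<^sub>3)\<close>. Imposing them one at
  a time, each lowers the dimension by one or by zero, so \<open>h\<^sup>0\<close> is the fixed number
  \<open>h\<^sup>0(O(d\<^sub>\<alpha>)) + h\<^sup>0(O(d\<^sub>\<beta>))\<close> minus the number of effective conditions. A loop condition in
  degree \<open>d\<close> is effective iff \<open>d \<ge> 1\<close>, or \<open>d = 0\<close> and \<open>\<lambda> \<noteq> 1\<close>. Once both loop conditions hold,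
  the edge condition is effective iff on one of the two sides some section satisfying its loop
  condition does not vanish at the edge point: this is always the case in degree \<open>\<ge> 2\<close>, never in
  negative degree, exactly when \<open>\<lambda> = 1\<close> in degree 0, and in degree 1 it depends on the data
  (it holds for \<open>\<lambda> = 1\<close> and fails for \<open>\<lambda> = -1\<close> with the points \<open>\<infinity>, 0, 1\<close>). The family jumps
  precisely when some degree \<open>0\<close> or \<open>1\<close> ambiguity is not masked by the other side.\<close>

interpretation pairs: vector_space pair_scale
  by unfold_locales (auto simp: pair_scale_def smult_add_left smult_add_right)

context vector_space begin

lemma dim_insert_notin_span:
  assumes "finite F" "S \<subseteq> span F" "x \<notin> span S"
  shows "dim (insert x S) = dim S + 1"
proof -
  obtain B where B: "B \<subseteq> span S" "independent B" "span S \<subseteq> span B" "card B = dim (span S)"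
    using basis_exists [of "span S"] by blast
  have "span S \<subseteq> span F" using assms(2) by (metis span_mono span_span)
  then have "finite B" using independent_span_bound[OF assms(1) B(2)] B(1) by blast
  have "dim (span (insert x S)) = Suc (dim S)"
  proof (rule dim_unique)
    show "insert x B \<subseteq> span (insert x S)"
      by (meson B(1) insertI1 insert_subset order_trans span_base span_mono subset_insertI)
    show "span (insert x S) \<subseteq> span (insert x B)"
      by (metis B(1,3) span_breakdown_eq span_subspace subsetI subspace_span)
    show "independent (insert x B)"
      by (metis B(1-3) independent_insert span_subspace subspace_span assms(3))
    show "card (insert x B) = Suc (dim S)"
      using B assms(3) \<open>finite B\<close>
      by (metis card_insert_disjoint dim_span in_mono span_base span_subspace subspace_span)
  qed
  then show ?thesis by simp
qed

lemma subspace_kernel: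
  fixes f :: "'b \<Rightarrow> 'a"
  assumes "subspace W"
    and "\<And>x y. f (x + y) = f x + f y" and "\<And>c x. f (c *s x) = c * f x"
  shows "subspace {x\<in>W. f x = 0}"
  using assms by (auto simp: subspace_def) (metis add.right_neutral add_left_cancel)

text \<open>\<open>dim\<close> is \<open>0\<close> on infinite-dimensional spans, hence the hypothesis \<open>W \<subseteq> span F\<close>.\<close>

lemma dim_eq_dim_kernel_plus:
  fixes f :: "'b \<Rightarrow> 'a"
  assumes W: "subspace W" and F: "finite F" "W \<subseteq> span F"
    and add: "\<And>x y. f (x + y) = f x + f y" and hom: "\<And>c x. f (c *s x) = c * f x"
  shows "dim W = dim {x\<in>W. f x = 0} + of_bool (\<exists>x\<in>W. f x \<noteq> 0)"
proof (cases "\<exists>x\<in>W. f x \<noteq> 0")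
  case False
  then have "{x\<in>W. f x = 0} = W" by auto
  then show ?thesis using False by simp
next
  case True
  then obtain x0 where x0: "x0 \<in> W" "f x0 \<noteq> 0" by blast
  define K where "K = {x\<in>W. f x = 0}"
  have "subspace K" unfolding K_def using W add hom by (rule subspace_kernel)
  moreover have "x0 \<notin> K" using x0 by (simp add: K_def)
  ultimately have "x0 \<notin> span K" by (metis span_eq_iff)
  have diff: "f (x - y) = f x - f y" for x y
    by (metis add diff_add_cancel eq_diff_eq)
  have "span (insert x0 K) = W"
  proof
    show "span (insert x0 K) \<subseteq> W"
      using W x0 by (intro span_minimal) (auto simp: K_def)
    show "W \<subseteq> span (insert x0 K)"
    proof
      fix w assume "w \<in> W"
      then have "w - (f w / f x0) *s x0 \<in> K"
        using x0 W by (auto simp: K_def diff hom intro!: subspace_diff subspace_scale)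
      then show "w \<in> span (insert x0 K)"
        unfolding span_breakdown_eq by (metis span_base)
    qed
  qed
  then have "dim W = dim (insert x0 K)" by (metis dim_span)
  also have "\<dots> = dim K + 1"
    using F \<open>x0 \<notin> span K\<close> by (intro dim_insert_notin_span[of F]) (auto simp: K_def)
  finally show ?thesis using True by (simp add: K_def)
qed

end

lemma hom_eval_add: "hom_eval d (p + q) x = hom_eval d p x + hom_eval d q x"
  by (simp add: hom_eval_def algebra_simps sum.distrib)

lemma hom_eval_smult: "hom_eval d (smult c p) x = c * hom_eval d p x"
  by (simp add: hom_eval_def sum_distrib_left algebra_simps)

lemma hom_eval_0 [simp]: "hom_eval d 0 x = 0"
  by (simp add: hom_eval_def)

lemma hom_eval_degree_0: "hom_eval 0 p x = coeff p 0"
  by (simp add: hom_eval_def)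

lemma zero_in_hom_sections [simp]: "0 \<in> hom_sections d"
  by (simp add: hom_sections_def)

lemma hom_eval_eq_poly:
  assumes "degree p \<le> m" "b \<noteq> 0"
  shows "hom_eval (int m) p (a, b) = b ^ m * poly p (a / b)"
proof -
  have "poly p y = (\<Sum>i\<le>m. coeff p i * y ^ i)" for y
    unfolding poly_altdef by (rule sum.mono_neutral_left) (use assms in \<open>auto simp: coeff_eq_0\<close>)
  then have "b ^ m * poly p (a / b) = (\<Sum>i\<le>m. b ^ m * (coeff p i * (a / b) ^ i))"
    by (simp add: sum_distrib_left)
  also have "\<dots> = (\<Sum>i\<le>m. coeff p i * a ^ i * b ^ (m - i))"
  proof (rule sum.cong)
    fix i assume "i \<in> {..m}"
    then have "b ^ m = b ^ i * b ^ (m - i)" by (simp flip: power_add)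
    then show "b ^ m * (coeff p i * (a / b) ^ i) = coeff p i * a ^ i * b ^ (m - i)"
      using assms(2) by (simp add: power_divide field_simps)
  qed simp
  finally show ?thesis by (simp add: hom_eval_def)
qed

lemma hom_eval_at_infinity: "hom_eval (int m) p (a, 0) = coeff p m * a ^ m"
proof -
  have "(\<Sum>i\<le>m. coeff p i * a ^ i * 0 ^ (m - i)) = (\<Sum>i\<le>m. if i = m then coeff p m * a ^ m else 0)"
    by (rule sum.cong) (auto simp: power_0_left)
  then show ?thesis by (simp add: hom_eval_def)
qed

lemma coeff_mult_degree_bounds:
  assumes "degree p \<le> m" "degree q \<le> n"
  shows "coeff (p * q) (m + n) = coeff p m * coeff q n"
proof (cases "degree p = m \<and> degree q = n")
  case True then show ?thesis using coeff_mult_degree_sum by metis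
next
  case False
  then have "degree p < m \<or> degree q < n" using assms by auto
  then have "degree (p * q) < m + n \<and> (coeff p m = 0 \<or> coeff q n = 0)"
    using assms degree_mult_le[of p q] by (auto simp: coeff_eq_0)
  then show ?thesis by (auto simp: coeff_eq_0)
qed

lemma hom_eval_mult:
  assumes "degree p \<le> m" "degree q \<le> n"
  shows "hom_eval (int (m + n)) (p * q) x = hom_eval (int m) p x * hom_eval (int n) q x"
proof -
  obtain a b where x: "x = (a, b)" by fastforce
  show ?thesis
  proof (cases "b = 0")
    case True then show ?thesis
      using coeff_mult_degree_bounds[OF assms] hom_eval_at_infinity[of "m + n" "p * q" a]
      by (simp add: x hom_eval_at_infinity power_add)
  next
    case False
    have "degree (p * q) \<le> m + n" using degree_mult_le[of p q] assms by linarith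
    then show ?thesis using False assms hom_eval_eq_poly[of "p * q" "m + n" b a]
      by (simp add: x hom_eval_eq_poly power_add)
  qed
qed

lemma degree_power_bound: "degree p \<le> m \<Longrightarrow> degree (p ^ k) \<le> m * k"
  by (metis degree_power_le mult.commute mult_le_mono2 order_trans)

lemma hom_eval_power:
  assumes "degree p \<le> m"
  shows "hom_eval (int (m * k)) (p ^ k) x = hom_eval (int m) p x ^ k"
proof (induction k)
  case 0 then show ?case by (simp add: hom_eval_degree_0)
next
  case (Suc k)
  have "hom_eval (int (m + m * k)) (p * p ^ k) x = hom_eval (int m) p x * hom_eval (int (m * k)) (p ^ k) x"
    using assms degree_power_bound[OF assms] by (rule hom_eval_mult)
  then show ?case using Suc by simp
qed

definition vanishing_form :: "complex \<times> complex \<Rightarrow> complex poly" where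
  "vanishing_form y = [:- fst y, snd y:]"

lemma degree_vanishing_form: "degree (vanishing_form y) \<le> 1"
  by (simp add: vanishing_form_def)

lemma hom_eval_vanishing_form: "hom_eval 1 (vanishing_form y) x = snd y * fst x - fst y * snd x"
  by (simp add: hom_eval_def vanishing_form_def)

lemma hom_eval_vanishing_form_power:
  "hom_eval (int k) (vanishing_form y ^ k) x = (snd y * fst x - fst y * snd x) ^ k"
  using hom_eval_power[OF degree_vanishing_form, of k y x] by (simp add: hom_eval_vanishing_form)

definition loop_condition_effective :: "int \<Rightarrow> complex \<times> complex \<Rightarrow> complex \<times> complex \<Rightarrow> complex \<Rightarrow> bool" where
  "loop_condition_effective d x y l \<longleftrightarrow> (\<exists>s\<in>hom_sections d. hom_eval d s x \<noteq> l * hom_eval d s y)"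

definition loop_section_nonvanishing_at ::
  "int \<Rightarrow> complex \<times> complex \<Rightarrow> complex \<times> complex \<Rightarrow> complex \<times> complex \<Rightarrow> complex \<Rightarrow> bool" where
  "loop_section_nonvanishing_at d x y z l \<longleftrightarrow>
     (\<exists>s\<in>hom_sections d. hom_eval d s x = l * hom_eval d s y \<and> hom_eval d s z \<noteq> 0)"

lemma hom_sections_degree_0: "hom_sections 0 = {p. degree p = 0}"
  by (simp add: hom_sections_def)

lemma loop_condition_effective_iff:
  assumes "proj_distinct x y"
  shows "loop_condition_effective d x y l \<longleftrightarrow> d > 0 \<or> (d = 0 \<and> l \<noteq> 1)"
proof (cases d "0 :: int" rule: linorder_cases)
  case less then show ?thesis by (simp add: loop_condition_effective_def hom_sections_def)
next
  case equal
  have "loop_condition_effective 0 x y l" if "l \<noteq> 1"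
    unfolding loop_condition_effective_def using that
    by (intro bexI[of _ 1]) (auto simp: hom_eval_degree_0 hom_sections_degree_0)
  then show ?thesis using equal by (auto simp: loop_condition_effective_def hom_eval_degree_0)
next
  case greater
  define n where "n = nat d"
  have d: "d = int n" "n \<ge> 1" using greater by (auto simp: n_def)
  define s where "s = vanishing_form y ^ n"
  have "degree s \<le> n" unfolding s_def using degree_power_bound[OF degree_vanishing_form] by simp
  moreover have "hom_eval d s y = 0" "hom_eval d s x \<noteq> 0"
    using d assms by (simp_all add: s_def hom_eval_vanishing_form_power proj_distinct_def mult.commute)
  ultimately have "loop_condition_effective d x y l"
    unfolding loop_condition_effective_def hom_sections_def using d by (intro bexI[of _ s]) auto
  then show ?thesis using greater by simp
qed

text \<open>In degree \<open>d \<ge> 2\<close> the section vanishing at \<open>x\<close> once and at \<open>y\<close> to order \<open>d - 1\<close> satisfies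
  every loop condition at \<open>x, y\<close> and is nonzero at \<open>z\<close>. Degree 1 is excluded since there the
  answer depends on \<open>l\<close> and the cross-ratio of the points.\<close>

lemma loop_section_nonvanishing_at_iff:
  assumes "d \<noteq> 1" "proj_distinct x y" "proj_distinct x z" "proj_distinct y z"
  shows "loop_section_nonvanishing_at d x y z l \<longleftrightarrow> d \<ge> 2 \<or> (d = 0 \<and> l = 1)"
proof (cases "d \<ge> 2")
  case True
  define n where "n = nat d - 1"
  have d: "d = int (1 + n)" "n \<ge> 1" using True by (auto simp: n_def)
  define s where "s = vanishing_form x * vanishing_form y ^ n"
  have deg: "degree (vanishing_form y ^ n) \<le> n"
    using degree_power_bound[OF degree_vanishing_form] by simp
  have ev: "hom_eval d s w = hom_eval 1 (vanishing_form x) w * hom_eval n (vanishing_form y ^ n) w" for w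
    using hom_eval_mult[OF degree_vanishing_form deg] by (simp add: s_def d)
  have "degree s \<le> 1 + n"
    using degree_mult_le[of "vanishing_form x" "vanishing_form y ^ n"] degree_vanishing_form[of x] deg
    by (simp add: s_def)
  moreover have "hom_eval d s x = 0" "hom_eval d s y = 0" "hom_eval d s z \<noteq> 0"
    using d(2) assms(3,4)
    by (simp_all add: ev hom_eval_vanishing_form hom_eval_vanishing_form_power proj_distinct_def mult.commute)
  ultimately show ?thesis
    unfolding loop_section_nonvanishing_at_def hom_sections_def using d True
    by (intro iffI disjI1 bexI[of _ s]) auto
next
  case False
  then consider "d < 0" | "d = 0" using assms(1) by linarith
  then show ?thesis
  proof cases
    case 1 then show ?thesis by (simp add: loop_section_nonvanishing_at_def hom_sections_def)
  next
    case 2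
    have "loop_section_nonvanishing_at 0 x y z 1"
      unfolding loop_section_nonvanishing_at_def
      by (intro bexI[of _ 1]) (auto simp: hom_eval_degree_0 hom_sections_degree_0)
    then show ?thesis using 2
      by (auto simp: loop_section_nonvanishing_at_def hom_eval_degree_0)
  qed
qed

definition pt_infinity :: "complex \<times> complex" where "pt_infinity = (1, 0)"
definition pt_zero :: "complex \<times> complex" where "pt_zero = (0, 1)"
definition pt_one :: "complex \<times> complex" where "pt_one = (1, 1)"

lemma proj_distinct_standard_points:
  "proj_distinct pt_infinity pt_zero" "proj_distinct pt_infinity pt_one" "proj_distinct pt_zero pt_one"
  by (simp_all add: proj_distinct_def pt_infinity_def pt_zero_def pt_one_def)

lemma loop_section_nonvanishing_at_standard:
  assumes "d \<ge> 0"
  shows "loop_section_nonvanishing_at d pt_infinity pt_zero pt_one 1"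
proof -
  define n where "n = nat d"
  have d: "d = int n" using assms by (simp add: n_def)
  define s :: "complex poly" where "s = 1 + monom 1 n"
  have deg: "degree s \<le> n" unfolding s_def
    by (metis degree_1 degree_add_le degree_monom_le le0)
  have "hom_eval d s pt_infinity = (if n = 0 then 2 else 1)"
    by (simp add: d pt_infinity_def hom_eval_at_infinity s_def coeff_monom)
  moreover have "hom_eval d s pt_zero = (if n = 0 then 2 else 1)"
    using hom_eval_eq_poly[OF deg, of 1 0] by (simp add: d pt_zero_def s_def poly_monom)
  moreover have "hom_eval d s pt_one = 2"
    using hom_eval_eq_poly[OF deg, of 1 1] by (simp add: d pt_one_def s_def poly_monom)
  ultimately show ?thesis unfolding loop_section_nonvanishing_at_def hom_sections_def
    using deg d by (intro bexI[of _ s]) auto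
qed

text \<open>A linear form with \<open>s(\<infinity>) = - s(0)\<close> vanishes at \<open>1\<close>.\<close>

lemma not_loop_section_nonvanishing_at_standard:
  "\<not> loop_section_nonvanishing_at 1 pt_infinity pt_zero pt_one (-1)"
  by (auto simp: loop_section_nonvanishing_at_def hom_eval_def pt_infinity_def pt_zero_def pt_one_def)

lemma hom_sections_pair_subspace: "pairs.subspace (hom_sections da \<times> hom_sections db)"
  unfolding pairs.subspace_def hom_sections_def pair_scale_def
  by (auto simp: zero_prod_def intro: order.trans[OF degree_add_le] order.trans[OF degree_smult_le])

lemma hom_sections_pair_finite_span:
  obtains F where "finite F" "hom_sections da \<times> hom_sections db \<subseteq> pairs.span F"
proof
  define N where "N = nat da + nat db"
  define F :: "(complex poly \<times> complex poly) set"
    where "F = (\<lambda>i. (monom 1 i, 0)) ` {..N} \<union> (\<lambda>i. (0, monom 1 i)) ` {..N}"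
  show "finite F" by (simp add: F_def)
  show "hom_sections da \<times> hom_sections db \<subseteq> pairs.span F"
  proof clarify
    fix s t assume st: "s \<in> hom_sections da" "t \<in> hom_sections db"
    have ds: "degree s \<le> N" and dt: "degree t \<le> N"
      using st by (auto simp: N_def hom_sections_def split: if_splits)
    have "(s, 0) = (\<Sum>i\<le>N. pair_scale (coeff s i) (monom 1 i, 0))"
      by (rule prod_eqI) (simp_all add: fst_sum snd_sum pair_scale_def smult_monom poly_as_sum_of_monoms'[OF ds])
    then have "(s, 0) \<in> pairs.span F"
      by (metis (no_types, lifting) F_def UnI1 image_eqI pairs.span_base pairs.span_scale pairs.span_sum)
    moreover have "(0, t) = (\<Sum>i\<le>N. pair_scale (coeff t i) (0, monom 1 i))"
      by (rule prod_eqI) (simp_all add: fst_sum snd_sum pair_scale_def smult_monom poly_as_sum_of_monoms'[OF dt])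
    then have "(0, t) \<in> pairs.span F"
      by (metis (no_types, lifting) F_def UnI2 image_eqI pairs.span_base pairs.span_scale pairs.span_sum)
    ultimately have "(s, 0) + (0, t) \<in> pairs.span F" by (rule pairs.span_add)
    then show "(s, t) \<in> pairs.span F" by simp
  qed
qed

definition G4_rank ::
  "int \<Rightarrow> int \<Rightarrow> (complex \<times> complex) \<Rightarrow> (complex \<times> complex) \<Rightarrow> (complex \<times> complex) \<Rightarrow>
   (complex \<times> complex) \<Rightarrow> (complex \<times> complex) \<Rightarrow> (complex \<times> complex) \<Rightarrow> complex \<Rightarrow> complex \<Rightarrow> nat" where
  "G4_rank da db p1 p2 p3 q1 q2 q3 l1 l2 =
     of_bool (loop_condition_effective da p1 p2 l1) + of_bool (loop_condition_effective db q1 q2 l2) +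
     of_bool (loop_section_nonvanishing_at da p1 p2 p3 l1 \<or> loop_section_nonvanishing_at db q1 q2 q3 l2)"

lemma edge_condition_effective_iff:
  assumes "c \<noteq> 0"
  shows "(\<exists>s\<in>hom_sections da. \<exists>t\<in>hom_sections db.
      hom_eval da s x = l * hom_eval da s y \<and> hom_eval db t u = m * hom_eval db t v \<and>
      hom_eval da s z \<noteq> c * hom_eval db t w) \<longleftrightarrow>
    loop_section_nonvanishing_at da x y z l \<or> loop_section_nonvanishing_at db u v w m"
  unfolding loop_section_nonvanishing_at_def
proof
  show "\<exists>s\<in>hom_sections da. \<exists>t\<in>hom_sections db. hom_eval da s x = l * hom_eval da s y \<and>
      hom_eval db t u = m * hom_eval db t v \<and> hom_eval da s z \<noteq> c * hom_eval db t w"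
    if "(\<exists>s\<in>hom_sections da. hom_eval da s x = l * hom_eval da s y \<and> hom_eval da s z \<noteq> 0) \<or>
      (\<exists>t\<in>hom_sections db. hom_eval db t u = m * hom_eval db t v \<and> hom_eval db t w \<noteq> 0)"
    using that assms by (metis hom_eval_0 mult_zero_right no_zero_divisors zero_in_hom_sections)
qed (metis mult_zero_right)

lemma G4_h0_plus_rank:
  assumes "l3 \<noteq> 0"
  shows "G4_h0 da db p1 p2 p3 q1 q2 q3 l1 l2 l3 + G4_rank da db p1 p2 p3 q1 q2 q3 l1 l2
     = pairs.dim (hom_sections da \<times> hom_sections db)"
proof -
  define W where "W = hom_sections da \<times> hom_sections db"
  define A where "A x = hom_eval da (fst x) p1 - l1 * hom_eval da (fst x) p2" for x :: "complex poly \<times> complex poly"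
  define B where "B x = hom_eval db (snd x) q1 - l2 * hom_eval db (snd x) q2" for x :: "complex poly \<times> complex poly"
  define C where "C x = hom_eval da (fst x) p3 - l3 * hom_eval db (snd x) q3" for x :: "complex poly \<times> complex poly"
  define K1 where "K1 = {x\<in>W. A x = 0}"
  define K2 where "K2 = {x\<in>K1. B x = 0}"
  obtain F where F: "finite F" "W \<subseteq> pairs.span F"
    unfolding W_def by (rule hom_sections_pair_finite_span)
  have linear: "A (x + y) = A x + A y" "A (pair_scale c x) = c * A x"
    "B (x + y) = B x + B y" "B (pair_scale c x) = c * B x"
    "C (x + y) = C x + C y" "C (pair_scale c x) = c * C x" for x y c
    by (simp_all add: A_def B_def C_def pair_scale_def hom_eval_add hom_eval_smult algebra_simps)
  have "K1 \<subseteq> W" "K2 \<subseteq> W" by (auto simp: K1_def K2_def)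
  then have F1: "K1 \<subseteq> pairs.span F" and F2: "K2 \<subseteq> pairs.span F" using F(2) by auto
  have W: "pairs.subspace W" using hom_sections_pair_subspace by (simp add: W_def)
  then have K1: "pairs.subspace K1" unfolding K1_def by (rule pairs.subspace_kernel) (use linear in auto)
  then have K2: "pairs.subspace K2" unfolding K2_def by (rule pairs.subspace_kernel) (use linear in auto)
  have "pairs.dim W = pairs.dim K1 + of_bool (\<exists>x\<in>W. A x \<noteq> 0)"
    unfolding K1_def using W F by (rule pairs.dim_eq_dim_kernel_plus) (use linear in auto)
  moreover have "pairs.dim K1 = pairs.dim K2 + of_bool (\<exists>x\<in>K1. B x \<noteq> 0)"
    unfolding K2_def using K1 F(1) F1 by (rule pairs.dim_eq_dim_kernel_plus) (use linear in auto)
  moreover have "pairs.dim K2 = pairs.dim {x\<in>K2. C x = 0} + of_bool (\<exists>x\<in>K2. C x \<noteq> 0)"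
    using K2 F(1) F2 by (rule pairs.dim_eq_dim_kernel_plus) (use linear in auto)
  moreover have "G4_sections da db p1 p2 p3 q1 q2 q3 l1 l2 l3 = {x\<in>K2. C x = 0}"
    by (auto simp: G4_sections_def K2_def K1_def W_def A_def B_def C_def)
  moreover have "(\<exists>x\<in>W. A x \<noteq> 0) \<longleftrightarrow> loop_condition_effective da p1 p2 l1"
    unfolding W_def A_def loop_condition_effective_def
    by (simp add: split_paired_Bex_Sigma) (meson zero_in_hom_sections)
  moreover have "(\<exists>x\<in>K1. B x \<noteq> 0) \<longleftrightarrow> loop_condition_effective db q1 q2 l2"
    unfolding K1_def W_def A_def B_def loop_condition_effective_def
    by (simp add: split_paired_Bex_Sigma) (metis hom_eval_0 mult_zero_right zero_in_hom_sections)
  moreover have "(\<exists>x\<in>K2. C x \<noteq> 0) \<longleftrightarrow>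
      loop_section_nonvanishing_at da p1 p2 p3 l1 \<or> loop_section_nonvanishing_at db q1 q2 q3 l2"
    using edge_condition_effective_iff[where da = da and db = db and x = p1 and y = p2 and z = p3
      and u = q1 and v = q2 and w = q3 and l = l1 and m = l2, OF assms]
    by (simp add: K2_def K1_def W_def A_def B_def C_def split_paired_Bex_Sigma) blast
  ultimately show ?thesis by (simp add: G4_h0_def G4_rank_def W_def)
qed

lemma G4_h0_neq_iff_rank_neq:
  assumes "G4_admissible p1 p2 p3 q1 q2 q3 l1 l2 l3" "G4_admissible p1' p2' p3' q1' q2' q3' l1' l2' l3'"
  shows "G4_h0 da db p1 p2 p3 q1 q2 q3 l1 l2 l3 \<noteq> G4_h0 da db p1' p2' p3' q1' q2' q3' l1' l2' l3' \<longleftrightarrow>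
    G4_rank da db p1 p2 p3 q1 q2 q3 l1 l2 \<noteq> G4_rank da db p1' p2' p3' q1' q2' q3' l1' l2'"
  using G4_h0_plus_rank[of l3 da db p1 p2 p3 q1 q2 q3 l1 l2]
    G4_h0_plus_rank[of l3' da db p1' p2' p3' q1' q2' q3' l1' l2'] assms
  by (auto simp: G4_admissible_def)

lemma G4_jumping_iff_rank_nonconstant:
  "G4_jumping da db \<longleftrightarrow>
     (\<exists>p1 p2 p3 q1 q2 q3 l1 l2 l3 p1' p2' p3' q1' q2' q3' l1' l2' l3'.
        G4_admissible p1 p2 p3 q1 q2 q3 l1 l2 l3 \<and> G4_admissible p1' p2' p3' q1' q2' q3' l1' l2' l3' \<and>
        G4_rank da db p1 p2 p3 q1 q2 q3 l1 l2 \<noteq> G4_rank da db p1' p2' p3' q1' q2' q3' l1' l2')"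
  unfolding G4_jumping_def by (simp add: G4_h0_neq_iff_rank_neq cong: conj_cong)

lemma G4_jumping_at_standard_points:
  assumes "l1 \<noteq> 0" "l2 \<noteq> 0" "l1' \<noteq> 0" "l2' \<noteq> 0"
    and "G4_rank da db pt_infinity pt_zero pt_one pt_infinity pt_zero pt_one l1 l2 \<noteq>
      G4_rank da db pt_infinity pt_zero pt_one pt_infinity pt_zero pt_one l1' l2'"
  shows "G4_jumping da db"
proof -
  have "G4_admissible pt_infinity pt_zero pt_one pt_infinity pt_zero pt_one l l' 1"
    if "l \<noteq> 0" "l' \<noteq> 0" for l l'
    using that proj_distinct_standard_points
    by (simp add: G4_admissible_def proj_point_def pt_infinity_def pt_zero_def pt_one_def)
  then show ?thesis unfolding G4_jumping_iff_rank_nonconstant using assms by blast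
qed

lemma G4_rank_of_not_jumping_degrees:
  assumes "G4_admissible p1 p2 p3 q1 q2 q3 l1 l2 l3"
    and "\<not> ((da < 0 \<and> db = 1) \<or> (da = 0 \<and> db \<ge> 0) \<or> (da = 1 \<and> db < 0) \<or>
      (da \<ge> 0 \<and> db = 0) \<or> (da = 1 \<and> db = 1))"
  shows "G4_rank da db p1 p2 p3 q1 q2 q3 l1 l2 = of_bool (da \<ge> 1) + of_bool (db \<ge> 1) + of_bool (da \<ge> 0 \<or> db \<ge> 0)"
proof -
  have dist: "proj_distinct p1 p2" "proj_distinct p1 p3" "proj_distinct p2 p3"
    "proj_distinct q1 q2" "proj_distinct q1 q3" "proj_distinct q2 q3"
    using assms(1) by (simp_all add: G4_admissible_def)
  show ?thesis
  proof (cases "da = 1 \<or> db = 1")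
    case True
    then have "(da = 1 \<and> db \<ge> 2) \<or> (db = 1 \<and> da \<ge> 2)" using assms(2) by linarith
    then show ?thesis
      by (auto simp: G4_rank_def loop_condition_effective_iff loop_section_nonvanishing_at_iff dist)
  next
    case False
    then show ?thesis using assms(2)
      by (auto simp: G4_rank_def loop_condition_effective_iff loop_section_nonvanishing_at_iff dist)
  qed
qed

lemma G4_jumping_of_jumping_degrees:
  assumes "(da < 0 \<and> db = 1) \<or> (da = 0 \<and> db \<ge> 0) \<or> (da = 1 \<and> db < 0) \<or>
    (da \<ge> 0 \<and> db = 0) \<or> (da = 1 \<and> db = 1)"
  shows "G4_jumping da db"
proof -
  note rank_simps = G4_rank_def loop_condition_effective_iff loop_section_nonvanishing_at_iff
    proj_distinct_standard_points loop_section_nonvanishing_at_standard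
    not_loop_section_nonvanishing_at_standard
  from assms consider "da < 0" "db = 1" | "da = 0" "db \<ge> 0" | "da = 1" "db < 0"
    | "da \<ge> 0" "db = 0" | "da = 1" "db = 1" by argo
  then show ?thesis
  proof cases
    case 1 show ?thesis
      by (rule G4_jumping_at_standard_points[of 1 1 1 "-1"]) (use 1 in \<open>simp_all add: rank_simps\<close>)
  next
    case 2 show ?thesis
      by (rule G4_jumping_at_standard_points[of 1 1 2 1]) (use 2 in \<open>simp_all add: rank_simps\<close>)
  next
    case 3 show ?thesis
      by (rule G4_jumping_at_standard_points[of 1 1 "-1" 1]) (use 3 in \<open>simp_all add: rank_simps\<close>)
  next
    case 4 show ?thesis
      by (rule G4_jumping_at_standard_points[of 1 1 1 2]) (use 4 in \<open>simp_all add: rank_simps\<close>)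
  next
    case 5 show ?thesis
      by (rule G4_jumping_at_standard_points[of 1 1 "-1" "-1"]) (use 5 in \<open>simp_all add: rank_simps\<close>)
  qed
qed

theorem mainTheorem11:
  fixes da db :: int
  shows "G4_jumping da db \<longleftrightarrow>
    ((da < 0 \<and> db = 1) \<or> (da = 0 \<and> db \<ge> 0) \<or> (da = 1 \<and> db < 0) \<or>
     (da \<ge> 0 \<and> db = 0) \<or> (da = 1 \<and> db = 1))"
    (is "_ \<longleftrightarrow> ?jumping_degrees")
proof
  assume "G4_jumping da db"
  then obtain p1 p2 p3 q1 q2 q3 l1 l2 l3 p1' p2' p3' q1' q2' q3' l1' l2' l3' where
    "G4_admissible p1 p2 p3 q1 q2 q3 l1 l2 l3" "G4_admissible p1' p2' p3' q1' q2' q3' l1' l2' l3'"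
    "G4_rank da db p1 p2 p3 q1 q2 q3 l1 l2 \<noteq> G4_rank da db p1' p2' p3' q1' q2' q3' l1' l2'"
    unfolding G4_jumping_iff_rank_nonconstant by blast
  then show ?jumping_degrees using G4_rank_of_not_jumping_degrees by metis
qed (rule G4_jumping_of_jumping_degrees)

end
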